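(* Let $n\ge1$, $m>1$, $a\in\mathbb{R}^n$, $d\in\mathbb{R}^m$ with $\|a\|\le\|d\|$, $S_{\le0}=\{(x,y)\in\mathbb{R}^{n+m}:\|x\|\le\|y\|,\ a^\mathsf{T} x+d^\mathsf{T} y\le0\}$, and $\lambda\in\mathbb{R}^n$ with $\|\lambda\|=1$. Let $C_\lambda=\{(x,y):\lambda^\mathsf{T} x\ge\|y\|\}$, $G(\lambda)=\{\beta\in\mathbb{R}^m:\|\beta\|=1,\ a^\mathsf{T}\lambda+d^\mathsf{T}\beta\le0\}$ and $C_{G(\lambda)}=\{(x,y):-\lambda^\mathsf{T} x+\beta^\mathsf{T} y\le0\ \forall\beta\in G(\lambda)\}$. If $C_{G(\lambda)}\neq\emptyset$ and $C$ is any $S_{\le0}$-free convex set with $C_\lambda\subseteq C$, then $C\subseteq C_{G(\lambda)}$.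
   Context: $\|\cdot\|$ is the Euclidean norm. A convex set $C$ is $S$-free if $\operatorname{int}(C)\cap S=\emptyset$. *)

theory Defs
  imports "HOL-Analysis.Analysis"
begin

definition S_free :: "'a::real_normed_vector set \<Rightarrow> 'a set \<Rightarrow> bool" where
  "S_free S C \<longleftrightarrow> convex C \<and> interior C \<inter> S = {}"

end

theory Submission
  imports Defs
begin

text \<open>
  Since \<open>C\<close> is convex and contains the open cone \<open>C\<^sub>\<lambda>\<close>, it lies in the closure of its
  interior, so it suffices to show \<open>\<beta> \<bullet> y \<le> \<lambda> \<bullet> x\<close> for interior points \<open>(x, y)\<close> and
  \<open>\<beta> \<in> G(\<lambda>)\<close>. If \<open>\<beta> \<bullet> y > \<lambda> \<bullet> x\<close>, the midpoint of \<open>(x, y)\<close> and the point \<open>(t\<lambda>, t\<beta>)\<close> of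
  \<open>C\<^sub>\<lambda>\<close> is interior to \<open>C\<close> and, for large \<open>t\<close>, lies in \<open>S\<^sub>\<le>\<^sub>0\<close>, provided
  \<open>a \<bullet> \<lambda> + d \<bullet> \<beta> < 0\<close> or \<open>(x, y)\<close> already satisfies the linear constraint. The remaining
  boundary case \<open>a \<bullet> \<lambda> + d \<bullet> \<beta> = 0\<close> is reduced to the strict one by approximating \<open>\<beta>\<close> on
  the unit sphere by points with smaller \<open>d \<bullet> \<beta>\<close>; this is possible (using \<open>m > 1\<close>) unless
  \<open>\<beta>\<close> minimises \<open>d \<bullet> \<beta>\<close>, and then \<open>\<parallel>a\<parallel> \<le> \<parallel>d\<parallel>\<close> forces \<open>a = \<parallel>d\<parallel> \<lambda>\<close>, \<open>d = -\<parallel>d\<parallel> \<beta>\<close>, which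
  makes the constraint read \<open>\<parallel>d\<parallel> (\<lambda> \<bullet> x - \<beta> \<bullet> y) \<le> 0\<close>.
\<close>

lemma sphere_descent_direction:
  fixes b d :: "'a::euclidean_space"
  assumes "2 \<le> DIM('a)" and "norm b = 1" and "d \<bullet> b \<noteq> - norm d"
  obtains w where "norm w = 1" "b \<bullet> w = 0" "d \<bullet> w < 0 \<or> d \<bullet> w = 0 \<and> d \<bullet> b > 0"
proof (cases "d = (d \<bullet> b) *\<^sub>R b")
  case False
  define r where "r = d - (d \<bullet> b) *\<^sub>R b"
  have "r \<noteq> 0" using False by (simp add: r_def)
  have "b \<bullet> r = 0"
    using \<open>norm b = 1\<close> by (simp add: r_def inner_diff_right norm_eq_1 inner_commute)
  then have "d \<bullet> r = r \<bullet> r"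
    by (simp add: r_def inner_diff_left inner_commute)
  show ?thesis
  proof
    show "norm (- (1 / norm r) *\<^sub>R r) = 1" using \<open>r \<noteq> 0\<close> by simp
    show "b \<bullet> - (1 / norm r) *\<^sub>R r = 0" using \<open>b \<bullet> r = 0\<close> by simp
    have "d \<bullet> - (1 / norm r) *\<^sub>R r = - norm r"
      using \<open>d \<bullet> r = r \<bullet> r\<close> \<open>r \<noteq> 0\<close> by (simp add: power2_eq_square flip: power2_norm_eq_inner)
    then show "d \<bullet> - (1 / norm r) *\<^sub>R r < 0 \<or> d \<bullet> - (1 / norm r) *\<^sub>R r = 0 \<and> d \<bullet> b > 0"
      using \<open>r \<noteq> 0\<close> by simp
  qed
next
  case True
  then have "norm d = \<bar>d \<bullet> b\<bar>"
    using \<open>norm b = 1\<close> by (metis norm_scaleR mult.right_neutral)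
  then have "d \<bullet> b > 0"
    using assms(3) True by (cases "d \<bullet> b \<ge> 0") auto
  obtain v where "v \<noteq> 0" "orthogonal b v"
    using orthogonal_to_vector_exists assms(1) by blast
  show ?thesis
  proof
    show "norm ((1 / norm v) *\<^sub>R v) = 1" using \<open>v \<noteq> 0\<close> by simp
    show "b \<bullet> (1 / norm v) *\<^sub>R v = 0" using \<open>orthogonal b v\<close> by (simp add: orthogonal_def)
    then have "d \<bullet> (1 / norm v) *\<^sub>R v = 0"
      by (subst True) simp
    then show "d \<bullet> (1 / norm v) *\<^sub>R v < 0 \<or> d \<bullet> (1 / norm v) *\<^sub>R v = 0 \<and> d \<bullet> b > 0"
      using \<open>d \<bullet> b > 0\<close> by simp
  qed
qed

lemma in_closure_sphere_inner_less:
  fixes b d :: "'a::euclidean_space"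
  assumes "2 \<le> DIM('a)" and "norm b = 1" and "d \<bullet> b \<noteq> - norm d"
  shows "b \<in> closure {g. norm g = 1 \<and> d \<bullet> g < d \<bullet> b}"
proof -
  obtain w where w: "norm w = 1" "b \<bullet> w = 0" and descent: "d \<bullet> w < 0 \<or> d \<bullet> w = 0 \<and> d \<bullet> b > 0"
    using sphere_descent_direction assms by blast
  define \<gamma> where "\<gamma> t = cos t *\<^sub>R b + sin t *\<^sub>R w" for t
  have "norm (\<gamma> t) = 1" for t
  proof -
    have "\<gamma> t \<bullet> \<gamma> t = (cos t)\<^sup>2 + (sin t)\<^sup>2"
      using w \<open>norm b = 1\<close> unfolding \<gamma>_def
      by (simp add: inner_add_left inner_add_right inner_commute norm_eq_1 power2_eq_square)
    then show ?thesis by (simp add: norm_eq_1)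
  qed
  have d\<gamma>: "d \<bullet> \<gamma> t = cos t * (d \<bullet> b) + sin t * (d \<bullet> w)" for t
    by (simp add: \<gamma>_def inner_add_right)
  have "\<forall>\<^sub>F t in at_right 0. d \<bullet> \<gamma> t < d \<bullet> b"
    unfolding eventually_at_right_field d\<gamma>
  proof (cases "d \<bullet> w < 0")
    case True
    have "((\<lambda>t. cos t * (d \<bullet> b) + sin t * (d \<bullet> w)) has_real_derivative d \<bullet> w) (at 0)"
      by (auto intro!: derivative_eq_intros)
    from DERIV_neg_dec_right[OF this True] show "\<exists>e>0. \<forall>t>0. t < e \<longrightarrow> cos t * (d \<bullet> b) + sin t * (d \<bullet> w) < d \<bullet> b"
      by simp
  next
    case False
    then have "d \<bullet> w = 0" "d \<bullet> b > 0" using descent by auto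
    have "cos t < cos 0" if "0 < t" "t < 1" for t :: real
      using that pi_gt3 by (intro cos_monotone_0_pi) auto
    then show "\<exists>e>0. \<forall>t>0. t < e \<longrightarrow> cos t * (d \<bullet> b) + sin t * (d \<bullet> w) < d \<bullet> b"
      using \<open>d \<bullet> w = 0\<close> \<open>d \<bullet> b > 0\<close> by (intro exI[of _ 1]) simp
  qed
  then have "\<forall>\<^sub>F t in at_right 0. \<gamma> t \<in> closure {g. norm g = 1 \<and> d \<bullet> g < d \<bullet> b}"
    using \<open>\<And>t. norm (\<gamma> t) = 1\<close> by (auto elim!: eventually_mono intro: closure_subset[THEN subsetD])
  moreover have "(\<gamma> \<longlongrightarrow> b) (at_right 0)"
  proof -
    have "(\<gamma> \<longlongrightarrow> \<gamma> 0) (at_right 0)"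
      unfolding \<gamma>_def by (intro tendsto_intros)
    then show ?thesis by (simp add: \<gamma>_def)
  qed
  ultimately show ?thesis
    by (intro Lim_in_closed_set[of _ \<gamma>]) auto
qed

lemma S_free_midpoint_notin:
  fixes S C :: "'a::euclidean_space set"
  assumes "S_free S C" and "p \<in> interior C" and "w \<in> C"
  shows "(1/2) *\<^sub>R (w + p) \<notin> S"
proof -
  have "w - (1/2) *\<^sub>R (w - p) \<in> interior C"
    using assms by (intro mem_interior_convex_shrink) (simp_all add: S_free_def)
  also have "w - (1/2) *\<^sub>R (w - p) = (1/2) *\<^sub>R (w + p)"
  proof -
    have "w = (1/2) *\<^sub>R w + (1/2) *\<^sub>R w"
      by (simp flip: scaleR_add_left)
    then show ?thesis
      by (simp add: scaleR_diff_right scaleR_add_right algebra_simps)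
  qed
  finally show ?thesis
    using \<open>S_free S C\<close> unfolding S_free_def by blast
qed

lemma S_free_interior_inner_le_of_sign:
  fixes a l x :: "'a::euclidean_space" and d g y :: "'b::euclidean_space"
  assumes free: "S_free {(x, y). norm x \<le> norm y \<and> a \<bullet> x + d \<bullet> y \<le> 0} C"
    and cone: "{(x, y). l \<bullet> x \<ge> norm y} \<subseteq> C"
    and "norm l = 1" "norm g = 1"
    and int: "(x, y) \<in> interior C"
    and sign: "a \<bullet> l + d \<bullet> g < 0 \<or> a \<bullet> l + d \<bullet> g \<le> 0 \<and> a \<bullet> x + d \<bullet> y \<le> 0"
  shows "g \<bullet> y \<le> l \<bullet> x"
proof (rule ccontr)
  \<comment> \<open>For large \<open>t\<close>, the midpoint of \<open>(x, y)\<close> and \<open>(t l, t g) \<in> C\<close> lies in \<open>S\<close>.\<close>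
  define q where "q = g \<bullet> y - l \<bullet> x"
  assume "\<not> g \<bullet> y \<le> l \<bullet> x"
  then have "q > 0" by (simp add: q_def)
  have "\<forall>\<^sub>F t in at_top. (norm x)\<^sup>2 - (norm y)\<^sup>2 \<le> 2 * t * q"
    by (rule eventually_mono[OF eventually_ge_at_top[of "((norm x)\<^sup>2 - (norm y)\<^sup>2) / (2 * q)"]])
      (use \<open>q > 0\<close> in \<open>simp add: pos_divide_le_eq mult_ac\<close>)
  moreover have "\<forall>\<^sub>F t in at_top. a \<bullet> x + d \<bullet> y + t * (a \<bullet> l + d \<bullet> g) \<le> 0"
  proof (cases "a \<bullet> l + d \<bullet> g < 0")
    case True
    show ?thesis
      by (rule eventually_mono[OF eventually_ge_at_top[of "(a \<bullet> x + d \<bullet> y) / - (a \<bullet> l + d \<bullet> g)"]])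
        (use True in \<open>simp add: pos_divide_le_eq algebra_simps\<close>)
  qed (use sign in auto)
  moreover have "\<forall>\<^sub>F t in at_top. (0::real) \<le> t"
    by (rule eventually_ge_at_top)
  ultimately have "\<forall>\<^sub>F t in at_top. 0 \<le> t \<and> (norm x)\<^sup>2 - (norm y)\<^sup>2 \<le> 2 * t * q
      \<and> a \<bullet> x + d \<bullet> y + t * (a \<bullet> l + d \<bullet> g) \<le> 0"
    by eventually_elim blast
  then obtain t where t: "0 \<le> t" "(norm x)\<^sup>2 - (norm y)\<^sup>2 \<le> 2 * t * q"
    "a \<bullet> x + d \<bullet> y + t * (a \<bullet> l + d \<bullet> g) \<le> 0"
    using eventually_happens' trivial_limit_at_top_linorder by blast
  have "norm (t *\<^sub>R g) \<le> l \<bullet> (t *\<^sub>R l)"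
    using \<open>norm l = 1\<close> \<open>norm g = 1\<close> t(1) by (simp add: dot_square_norm)
  then have "(t *\<^sub>R l, t *\<^sub>R g) \<in> C"
    using cone by auto
  then have "((1/2) *\<^sub>R (t *\<^sub>R l + x), (1/2) *\<^sub>R (t *\<^sub>R g + y))
      \<notin> {(x, y). norm x \<le> norm y \<and> a \<bullet> x + d \<bullet> y \<le> 0}"
    using S_free_midpoint_notin[OF free int] by fastforce
  moreover have "norm (t *\<^sub>R l + x) \<le> norm (t *\<^sub>R g + y)"
  proof -
    have "(norm (t *\<^sub>R l + x))\<^sup>2 = t\<^sup>2 + 2 * t * (l \<bullet> x) + (norm x)\<^sup>2"
      "(norm (t *\<^sub>R g + y))\<^sup>2 = t\<^sup>2 + 2 * t * (g \<bullet> y) + (norm y)\<^sup>2"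
      using dot_norm[of "t *\<^sub>R l" x] dot_norm[of "t *\<^sub>R g" y] \<open>norm l = 1\<close> \<open>norm g = 1\<close>
      by (simp_all add: power_mult_distrib)
    then show ?thesis
      using t(2) power2_le_imp_le[of "norm (t *\<^sub>R l + x)" "norm (t *\<^sub>R g + y)"]
      by (simp add: q_def right_diff_distrib)
  qed
  moreover have "a \<bullet> (t *\<^sub>R l + x) + d \<bullet> (t *\<^sub>R g + y) \<le> 0"
    using t(3) by (simp add: inner_add_right algebra_simps)
  ultimately show False
    by simp
qed

lemma S_free_interior_inner_le:
  fixes a l x :: "'a::euclidean_space" and d \<beta> y :: "'b::euclidean_space"
  assumes "2 \<le> DIM('b)" and "norm a \<le> norm d"
    and free: "S_free {(x, y). norm x \<le> norm y \<and> a \<bullet> x + d \<bullet> y \<le> 0} C"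
    and cone: "{(x, y). l \<bullet> x \<ge> norm y} \<subseteq> C"
    and "norm l = 1" "norm \<beta> = 1" "a \<bullet> l + d \<bullet> \<beta> \<le> 0"
    and int: "(x, y) \<in> interior C"
  shows "\<beta> \<bullet> y \<le> l \<bullet> x"
proof -
  consider "a \<bullet> l + d \<bullet> \<beta> < 0 \<or> a \<bullet> x + d \<bullet> y \<le> 0"
    | "a \<bullet> l + d \<bullet> \<beta> = 0" "a \<bullet> x + d \<bullet> y > 0" "d \<bullet> \<beta> = - norm d"
    | "a \<bullet> l + d \<bullet> \<beta> = 0" "d \<bullet> \<beta> \<noteq> - norm d"
    using \<open>a \<bullet> l + d \<bullet> \<beta> \<le> 0\<close> by linarith
  then show ?thesis
  proof cases
    case 1
    then show ?thesis
      using S_free_interior_inner_le_of_sign[OF free cone] assms by blast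
  next
    case 2
    have "a \<bullet> l \<le> norm a"
      using norm_cauchy_schwarz[of a l] \<open>norm l = 1\<close> by simp
    then have "norm a = norm d" "a \<bullet> l = norm a * norm l"
      using 2 \<open>norm a \<le> norm d\<close> \<open>norm l = 1\<close> by simp_all
    then have "a = norm d *\<^sub>R l"
      using norm_cauchy_schwarz_eq[of a l] \<open>norm l = 1\<close> by simp
    moreover have "d \<bullet> - \<beta> = norm d * norm (- \<beta>)"
      using 2 \<open>norm \<beta> = 1\<close> by simp
    then have "d = - (norm d *\<^sub>R \<beta>)"
      using norm_cauchy_schwarz_eq[of d "- \<beta>"] \<open>norm \<beta> = 1\<close> by simp
    ultimately have "a \<bullet> x + d \<bullet> y = norm d * (l \<bullet> x - \<beta> \<bullet> y)"
      by (metis inner_minus_left inner_scaleR_left right_diff_distrib uminus_add_conv_diff add.commute)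
    then show ?thesis
      using 2 by (simp add: zero_less_mult_iff)
  next
    case 3
    have "\<beta> \<in> closure {g. norm g = 1 \<and> d \<bullet> g < d \<bullet> \<beta>}"
      using in_closure_sphere_inner_less assms(1) \<open>norm \<beta> = 1\<close> 3 by blast
    also have "\<dots> \<subseteq> {g. g \<bullet> y \<le> l \<bullet> x}"
    proof (rule closure_minimal)
      show "{g. norm g = 1 \<and> d \<bullet> g < d \<bullet> \<beta>} \<subseteq> {g. g \<bullet> y \<le> l \<bullet> x}"
        using S_free_interior_inner_le_of_sign[OF free cone \<open>norm l = 1\<close> _ int] 3 by auto
      show "closed {g. g \<bullet> y \<le> l \<bullet> x}"
        by (intro closed_Collect_le continuous_intros)
    qed
    finally show ?thesis by simp
  qed
qed

theorem proposition1:
  fixes a l :: "real ^ 'n" and d :: "real ^ 'm" and C :: "((real ^ 'n) \<times> (real ^ 'm)) set"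
  assumes "CARD('m) > 1"
    and "norm a \<le> norm d"
    and "norm l = 1"
    and "{(x, y). \<forall>\<beta> \<in> {\<beta>. norm \<beta> = 1 \<and> a \<bullet> l + d \<bullet> \<beta> \<le> 0}. - (l \<bullet> x) + \<beta> \<bullet> y \<le> 0} \<noteq> {}"
    and "S_free {(x, y). norm x \<le> norm y \<and> a \<bullet> x + d \<bullet> y \<le> 0} C"
    and "{(x, y). l \<bullet> x \<ge> norm y} \<subseteq> C"
  shows "C \<subseteq> {(x, y). \<forall>\<beta> \<in> {\<beta>. norm \<beta> = 1 \<and> a \<bullet> l + d \<bullet> \<beta> \<le> 0}. - (l \<bullet> x) + \<beta> \<bullet> y \<le> 0}"
proof -
  have "convex C"
    using assms(5) by (simp add: S_free_def)
  have "open {p. norm (snd p) < l \<bullet> fst p}" "{p. norm (snd p) < l \<bullet> fst p} \<subseteq> C"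
    using assms(6) by (auto intro!: open_Collect_less continuous_intros)
  moreover have "(l, 0) \<in> {p. norm (snd p) < l \<bullet> fst p}"
    using assms(3) by (simp add: dot_square_norm)
  ultimately have "interior C \<noteq> {}"
    using interior_maximal by blast
  have "C \<subseteq> {(x, y). \<beta> \<bullet> y \<le> l \<bullet> x}" if "norm \<beta> = 1" "a \<bullet> l + d \<bullet> \<beta> \<le> 0" for \<beta>
  proof -
    have "interior C \<subseteq> {(x, y). \<beta> \<bullet> y \<le> l \<bullet> x}"
      using S_free_interior_inner_le[OF _ assms(2,5,6,3) that] assms(1) by auto
    moreover have "closed {(x, y). \<beta> \<bullet> y \<le> l \<bullet> x}"
      unfolding case_prod_unfold by (intro closed_Collect_le continuous_intros)
    ultimately have "closure (interior C) \<subseteq> {(x, y). \<beta> \<bullet> y \<le> l \<bullet> x}"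
      by (rule closure_minimal)
    then show ?thesis
      using convex_closure_interior[OF \<open>convex C\<close> \<open>interior C \<noteq> {}\<close>] closure_subset by blast
  qed
  then show ?thesis by auto
qed

end
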